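(* Given a closure operator $k$ on $\mathcal{L}$ such that $\mathcal{L}(p(x)) \subseteq k^*(\mathcal{L})$ for all $x$, if $k_p(\ell) \neq k_p(\jmath)$ then $k(\ell) \neq k(\jmath)$.
   Context: $\mathcal{L}$ is a security lattice (ordered by $\sqsubseteq$, with joins $\sqcup$) that also has greatest lower bounds (meets). Programs $p$ are partial functions from $\mathcal{P}(I \times \mathcal{L})$ to $\mathcal{P}(O \times \mathcal{L})$; $\mathcal{L}(x) = \{\ell \mid a^\ell \in x\}$ is the set of labels in $x$. A closure operator $k : \mathcal{L} \to \mathcal{L}$ is extensive ($\ell \sqsubseteq k(\ell)$), monotone, and idempotent; $k^*(S) = \{k(s) \mid s \in S\}$. $k_p(\ell)$ is the greatest lower bound (meet) of $\{\jmath \mid \exists x.\ \jmath \in \mathcal{L}(p(x)) \wedge \ell \sqsubseteq \jmath\}$. *)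

theory Defs
  imports Main
begin

text \<open>Labelled values: pairs (value, label). Programs are partial functions,
modelled with option.\<close>

definition labels :: "('a \<times> 'l) set \<Rightarrow> 'l set" where
  "labels x = {l. \<exists>a. (a, l) \<in> x}"

definition closure_op :: "('l::complete_lattice \<Rightarrow> 'l) \<Rightarrow> bool" where
  "closure_op k \<longleftrightarrow> (\<forall>l. l \<le> k l) \<and> mono k \<and> (\<forall>l. k (k l) = k l)"

definition kstar :: "('l \<Rightarrow> 'l) \<Rightarrow> 'l set \<Rightarrow> 'l set" where
  "kstar k S = {k s | s. s \<in> S}"

definition kp :: "(('i \<times> 'l) set \<Rightarrow> ('o \<times> 'l::complete_lattice) set option) \<Rightarrow> 'l \<Rightarrow> 'l" where
  "kp p l = Inf {j. \<exists>x y. p x = Some y \<and> j \<in> labels y \<and> l \<le> j}"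

end

theory Submission
  imports Defs
begin

text \<open>Every output label is closed under \<open>k\<close>, and a closed label lies above \<open>l\<close> exactly
  when it lies above \<open>k l\<close>. Hence \<open>k\<^sub>p l = k\<^sub>p (k l)\<close>, so \<open>k\<^sub>p\<close> factors through \<open>k\<close>.\<close>

lemma closure_op_le_fixed_iff:
  assumes "closure_op k" and "k c = c"
  shows "a \<le> c \<longleftrightarrow> k a \<le> c"
proof
  assume "a \<le> c"
  then have "k a \<le> k c"
    using assms(1) by (simp add: closure_op_def monoD)
  then show "k a \<le> c"
    using assms(2) by simp
next
  assume "k a \<le> c"
  then show "a \<le> c"
    using assms(1) order_trans unfolding closure_op_def by blast
qed

lemma closure_op_fixed_on_kstar:
  assumes "closure_op k" and "c \<in> kstar k UNIV"
  shows "k c = c"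
  using assms unfolding closure_op_def kstar_def by auto

lemma kp_closure:
  assumes "closure_op k"
    and "\<And>x y. p x = Some y \<Longrightarrow> labels y \<subseteq> kstar k UNIV"
  shows "kp p (k l) = kp p l"
proof -
  have "k l \<le> c \<longleftrightarrow> l \<le> c" if "p x = Some y" "c \<in> labels y" for x y c
  proof -
    have "k c = c"
      using closure_op_fixed_on_kstar[OF assms(1)] assms(2) that by blast
    then show ?thesis
      using closure_op_le_fixed_iff[OF assms(1), of c l] by simp
  qed
  then have "{c. \<exists>x y. p x = Some y \<and> c \<in> labels y \<and> k l \<le> c}
           = {c. \<exists>x y. p x = Some y \<and> c \<in> labels y \<and> l \<le> c}"
    by blast
  then show ?thesis
    unfolding kp_def by simp
qed

theorem mainTheorem18:
  fixes k :: "'l::complete_lattice \<Rightarrow> 'l"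
    and p :: "('i \<times> 'l) set \<Rightarrow> ('o \<times> 'l) set option"
  assumes "closure_op k"
    and "\<And>x y. p x = Some y \<Longrightarrow> labels y \<subseteq> kstar k UNIV"
    and "kp p l \<noteq> kp p j"
  shows "k l \<noteq> k j"
proof
  assume "k l = k j"
  have kp_k: "kp p (k a) = kp p a" for a
    using assms(1,2) by (rule kp_closure)
  have "kp p l = kp p j"
    using kp_k[of l] kp_k[of j] \<open>k l = k j\<close> by simp
  with assms(3) show False ..
qed

end
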